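(* Let $n\geq 2$. If a closed subgroup $H$ of $\mathrm{Aut}(\mathbb{A}^n_{\mathbb{C}})$ strictly contains $\mathcal{B}_n$, then $H$ contains a linear automorphism (i.e. an element $(\sum_j a_{1j}x_j,\dots,\sum_j a_{nj}x_j)$ with $(a_{ij})\in\mathrm{GL}_n(\mathbb{C})$) which does not belong to $\mathcal{B}_n$.
   Context: $\mathrm{Aut}(\mathbb{A}^n_{\mathbb{C}})$ is the group of polynomial automorphisms $f=(f_1,\dots,f_n)$ of $\mathbb{A}^n_{\mathbb{C}}$, viewed as an ind-group filtered by degree ($\deg f=\max\deg f_i$); a subset is closed if its intersection with each set of automorphisms of degree $\le d$ is Zariski closed in that variety (a locally closed subset of the affine space $(\mathbb{C}[x_1,\dots,x_n]_{\le d})^n$). $\mathcal{B}_n=\{f: f_i\in\mathbb{C}[x_i,\dots,x_n]\ \forall i\}$ is the triangular (Jonquières) subgroup. *)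

theory Defs
  imports Complex_Main "HOL-Library.Poly_Mapping"
begin

text \<open>Multivariate polynomials over C in variables indexed by 'v, represented
  (as in the AFP entry Polynomials) by finitely supported maps from monomials
  (finitely supported exponent vectors) to coefficients.\<close>

type_synonym 'v cpoly = "('v \<Rightarrow>\<^sub>0 nat) \<Rightarrow>\<^sub>0 complex"

definition peval :: "'v cpoly \<Rightarrow> ('v \<Rightarrow> complex) \<Rightarrow> complex" where
  "peval p x = (\<Sum>m\<in>Poly_Mapping.keys p. Poly_Mapping.lookup p m * (\<Prod>v\<in>Poly_Mapping.keys m. x v ^ Poly_Mapping.lookup m v))"

definition pvars :: "'v cpoly \<Rightarrow> 'v set" where
  "pvars p = (\<Union>m\<in>Poly_Mapping.keys p. Poly_Mapping.keys m)"

definition mdeg :: "('v \<Rightarrow>\<^sub>0 nat) \<Rightarrow> nat" where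
  "mdeg m = (\<Sum>v\<in>Poly_Mapping.keys m. Poly_Mapping.lookup m v)"

text \<open>Polynomial self-maps of A^n: n-tuples (f_0,...,f_{n-1}) of polynomials in
  x_0,...,x_{n-1} (variables indexed 0..n-1; components beyond n are zero).\<close>

definition polymap :: "nat \<Rightarrow> (nat \<Rightarrow> nat cpoly) \<Rightarrow> bool" where
  "polymap n f \<longleftrightarrow> (\<forall>i<n. pvars (f i) \<subseteq> {..<n}) \<and> (\<forall>i\<ge>n. f i = 0)"

definition pts :: "nat \<Rightarrow> (nat \<Rightarrow> complex) set" where
  "pts n = {x. \<forall>i\<ge>n. x i = 0}"

definition ev :: "(nat \<Rightarrow> nat cpoly) \<Rightarrow> (nat \<Rightarrow> complex) \<Rightarrow> (nat \<Rightarrow> complex)" where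
  "ev f x = (\<lambda>i. peval (f i) x)"

definition Aut :: "nat \<Rightarrow> (nat \<Rightarrow> nat cpoly) set" where
  "Aut n = {f. polymap n f \<and> (\<exists>g. polymap n g \<and>
      (\<forall>x\<in>pts n. ev f (ev g x) = x \<and> ev g (ev f x) = x))}"

definition Aut_le :: "nat \<Rightarrow> nat \<Rightarrow> (nat \<Rightarrow> nat cpoly) set" where
  "Aut_le n d = {f\<in>Aut n. \<forall>i<n. \<forall>m\<in>Poly_Mapping.keys (f i). mdeg m \<le> d}"

text \<open>A subset S of Aut_le n d is Zariski closed in it iff it is cut out, inside
  Aut_le n d, by a family of polynomial functions in the coefficients
  (the coordinate indexed by (i,m) is the coefficient of monomial m in f_i).\<close>
definition zar_closed_in :: "nat \<Rightarrow> nat \<Rightarrow> (nat \<Rightarrow> nat cpoly) set \<Rightarrow> bool" where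
  "zar_closed_in n d S \<longleftrightarrow> (\<exists>P :: (nat \<times> (nat \<Rightarrow>\<^sub>0 nat)) cpoly set.
      \<forall>f\<in>Aut_le n d. f \<in> S \<longleftrightarrow> (\<forall>p\<in>P. peval p (\<lambda>(i, m). Poly_Mapping.lookup (f i) m) = 0))"

definition ind_closed :: "nat \<Rightarrow> (nat \<Rightarrow> nat cpoly) set \<Rightarrow> bool" where
  "ind_closed n S \<longleftrightarrow> S \<subseteq> Aut n \<and> (\<forall>d. zar_closed_in n d (S \<inter> Aut_le n d))"

text \<open>Group elements are tuples; the composite/inverse is any polynomial tuple
  inducing the composite/inverse map (such a tuple is unique over C).\<close>
definition aut_subgroup :: "nat \<Rightarrow> (nat \<Rightarrow> nat cpoly) set \<Rightarrow> bool" where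
  "aut_subgroup n H \<longleftrightarrow> H \<subseteq> Aut n \<and>
     (\<exists>e\<in>H. \<forall>x\<in>pts n. ev e x = x) \<and>
     (\<forall>f\<in>H. \<forall>g\<in>H. \<forall>h. polymap n h \<and> (\<forall>x\<in>pts n. ev h x = ev f (ev g x)) \<longrightarrow> h \<in> H) \<and>
     (\<forall>f\<in>H. \<forall>h. polymap n h \<and> (\<forall>x\<in>pts n. ev h (ev f x) = x \<and> ev f (ev h x) = x) \<longrightarrow> h \<in> H)"

definition Bn :: "nat \<Rightarrow> (nat \<Rightarrow> nat cpoly) set" where
  "Bn n = {f\<in>Aut n. \<forall>i<n. pvars (f i) \<subseteq> {i..<n}}"

definition linear_aut :: "nat \<Rightarrow> (nat \<Rightarrow> nat cpoly) \<Rightarrow> bool" where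
  "linear_aut n f \<longleftrightarrow> f \<in> Aut n \<and>
     (\<exists>a :: nat \<Rightarrow> nat \<Rightarrow> complex.
        (\<forall>i<n. f i = (\<Sum>j<n. Poly_Mapping.single (Poly_Mapping.single j 1) (a i j))) \<and>
        (\<exists>b :: nat \<Rightarrow> nat \<Rightarrow> complex. \<forall>i<n. \<forall>j<n.
            (\<Sum>k<n. a i k * b k j) = (if i = j then 1 else 0) \<and>
            (\<Sum>k<n. b i k * a k j) = (if i = j then 1 else 0)))"

end

theory Submission
  imports Defs "HOL-Analysis.Analysis"
begin

text \<open>Take \<open>f \<in> H\<close> outside \<open>Bn n\<close>: some component \<open>f\<^sub>i\<close> depends on a variable \<open>x\<^sub>j\<close> with \<open>j < i\<close>,
  so \<open>\<partial>f\<^sub>i/\<partial>x\<^sub>j\<close> is nonzero at some point \<open>p\<close>. Composing with triangular translations gives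
  \<open>g \<in> H\<close> with \<open>g(0) = 0\<close> and \<open>\<partial>g\<^sub>i/\<partial>x\<^sub>j(0) \<noteq> 0\<close>. Conjugating by the scalings \<open>x \<mapsto> s x\<close>, which are
  triangular, puts \<open>s\<^sup>-\<^sup>1 g(s x)\<close> into \<open>H\<close> for all \<open>s \<noteq> 0\<close>; its coefficients are polynomial in \<open>s\<close>,
  its degree is bounded, and at \<open>s = 0\<close> it becomes the linear part \<open>L\<close> of \<open>g\<close>. Closedness of
  \<open>H\<close> puts \<open>L\<close> into \<open>H\<close>; \<open>L\<close> is invertible with inverse the linear part of \<open>g\<^sup>-\<^sup>1\<close>, and its
  entry \<open>\<partial>g\<^sub>i/\<partial>x\<^sub>j(0) \<noteq> 0\<close> shows that it is not triangular.\<close>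

section \<open>Evaluating polynomials\<close>

definition meval :: "('v \<Rightarrow>\<^sub>0 nat) \<Rightarrow> ('v \<Rightarrow> complex) \<Rightarrow> complex" where
  "meval m x = (\<Prod>v\<in>Poly_Mapping.keys m. x v ^ Poly_Mapping.lookup m v)"

lemma peval_eq_sum_meval: "peval p x = (\<Sum>m\<in>Poly_Mapping.keys p. Poly_Mapping.lookup p m * meval m x)"
  by (simp add: peval_def meval_def)

lemma peval_eq_sum_superset:
  assumes "finite K" "Poly_Mapping.keys p \<subseteq> K"
  shows "peval p x = (\<Sum>m\<in>K. Poly_Mapping.lookup p m * meval m x)"
  unfolding peval_eq_sum_meval using assms
  by (intro sum.mono_neutral_left) (auto simp: in_keys_iff)

lemma meval_eq_prod_superset:
  assumes "finite K" "Poly_Mapping.keys m \<subseteq> K"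
  shows "meval m x = (\<Prod>v\<in>K. x v ^ Poly_Mapping.lookup m v)"
  unfolding meval_def using assms
  by (intro prod.mono_neutral_left) (auto simp: in_keys_iff)

lemma meval_add: "meval (a + b) x = meval a x * meval b x"
proof -
  let ?K = "Poly_Mapping.keys a \<union> Poly_Mapping.keys b"
  have "meval (a + b) x = (\<Prod>v\<in>?K. x v ^ Poly_Mapping.lookup (a + b) v)"
    by (rule meval_eq_prod_superset) (use keys_add[of a b] in auto)
  also have "\<dots> = (\<Prod>v\<in>?K. x v ^ Poly_Mapping.lookup a v) * (\<Prod>v\<in>?K. x v ^ Poly_Mapping.lookup b v)"
    by (simp add: lookup_add power_add prod.distrib)
  also have "\<dots> = meval a x * meval b x"
    by (subst (1 2) meval_eq_prod_superset[of ?K]) auto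
  finally show ?thesis .
qed

lemma meval_zero [simp]: "meval 0 x = 1"
  by (simp add: meval_def)

lemma meval_scale: "meval m (\<lambda>v. s * x v) = s ^ mdeg m * meval m x"
  unfolding meval_def mdeg_def by (simp add: power_mult_distrib prod.distrib power_sum)

lemma meval_at_zero: "meval m (\<lambda>_. 0) = (if m = 0 then 1 else 0)"
proof (cases "m = 0")
  case False
  then obtain l where "l \<in> Poly_Mapping.keys m"
    by (metis poly_mapping_eqI lookup_zero not_in_keys_iff_lookup_eq_zero)
  then show ?thesis
    unfolding meval_def using False by (auto simp: in_keys_iff intro!: prod_zero bexI[of _ l])
qed simp

lemma meval_upd_zero:
  "meval m (x(j := 0)) = (if Poly_Mapping.lookup m j = 0 then meval m x else 0)"
proof (cases "Poly_Mapping.lookup m j = 0")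
  case True
  then have "j \<notin> Poly_Mapping.keys m" by (simp add: in_keys_iff)
  then show ?thesis unfolding meval_def using True by (auto intro!: prod.cong)
next
  case False
  then have "j \<in> Poly_Mapping.keys m" by (simp add: in_keys_iff)
  then show ?thesis unfolding meval_def using False by (auto intro!: prod_zero bexI[of _ j])
qed

lemma peval_zero [simp]: "peval 0 x = 0"
  by (simp add: peval_def)

lemma peval_single: "peval (Poly_Mapping.single m c) x = c * meval m x"
  by (simp add: peval_def meval_def)

lemma peval_add: "peval (p + q) x = peval p x + peval q x"
proof -
  let ?K = "Poly_Mapping.keys p \<union> Poly_Mapping.keys q"
  have "peval (p + q) x = (\<Sum>m\<in>?K. Poly_Mapping.lookup (p + q) m * meval m x)"
    by (rule peval_eq_sum_superset) (use keys_add[of p q] in auto)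
  also have "\<dots> = (\<Sum>m\<in>?K. Poly_Mapping.lookup p m * meval m x) + (\<Sum>m\<in>?K. Poly_Mapping.lookup q m * meval m x)"
    by (simp add: lookup_add distrib_right sum.distrib)
  also have "\<dots> = peval p x + peval q x"
    by (subst (1 2) peval_eq_sum_superset[of ?K]) auto
  finally show ?thesis .
qed

lemma peval_sum: "peval (\<Sum>i\<in>I. P i) x = (\<Sum>i\<in>I. peval (P i) x)"
  by (induction I rule: infinite_finite_induct) (auto simp: peval_add)

lemma peval_at_zero: "peval q (\<lambda>_. 0) = Poly_Mapping.lookup q 0"
proof -
  have "peval q (\<lambda>_. 0) = (\<Sum>m\<in>insert 0 (Poly_Mapping.keys q). Poly_Mapping.lookup q m * meval m (\<lambda>_. 0))"
    by (rule peval_eq_sum_superset) auto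
  also have "\<dots> = Poly_Mapping.lookup q 0"
    by (subst sum.remove[of _ 0]) (auto simp: meval_at_zero)
  finally show ?thesis .
qed

lemma peval_cong:
  assumes "\<And>v. v \<in> pvars q \<Longrightarrow> x v = y v"
  shows "peval q x = peval q y"
proof -
  have "\<forall>m\<in>Poly_Mapping.keys q. \<forall>v\<in>Poly_Mapping.keys m. x v = y v"
    using assms unfolding pvars_def by blast
  then show ?thesis
    unfolding peval_def by (intro sum.cong refl arg_cong2[where f = "(*)"] prod.cong) auto
qed

lemma pvars_add: "pvars (p + q) \<subseteq> pvars p \<union> pvars q"
  unfolding pvars_def using keys_add[of p q] by auto

lemma pvars_single: "pvars (Poly_Mapping.single m c) \<subseteq> Poly_Mapping.keys m"
  unfolding pvars_def by auto

lemma pvars_sum: "pvars (\<Sum>i\<in>I. P i) \<subseteq> (\<Union>i\<in>I. pvars (P i))"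
  unfolding pvars_def using keys_sum[of P I] by blast

lemma pvars_mapp_subset: "pvars (Poly_Mapping.mapp f q) \<subseteq> pvars q"
  unfolding pvars_def using keys_mapp_subset[of f q] by blast

lemma polymap_vars: "polymap n f \<Longrightarrow> pvars (f k) \<subseteq> {..<n}"
  unfolding polymap_def by (cases "k < n") (auto simp: pvars_def)

lemma continuous_on_peval:
  assumes "\<And>v. continuous_on UNIV (\<lambda>s. Y s v)"
  shows "continuous_on UNIV (\<lambda>s::complex. peval q (Y s))"
  unfolding peval_def using assms by (intro continuous_intros) auto

lemma holomorphic_on_peval_line: "(\<lambda>t. peval q (\<lambda>v. a v + t * b v)) holomorphic_on UNIV"
  unfolding peval_def by (intro holomorphic_intros)

lemma continuous_eq_const_at_0:
  fixes F :: "complex \<Rightarrow> complex"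
  assumes "continuous_on UNIV F" "\<And>s. s \<noteq> 0 \<Longrightarrow> F s = c"
  shows "F 0 = c"
proof -
  have "(F \<longlongrightarrow> F 0) (at 0)"
    using assms(1) by (metis continuous_on_def UNIV_I at_within_open open_UNIV)
  moreover have "(F \<longlongrightarrow> c) (at 0)"
    by (rule tendsto_eventually) (auto simp: eventually_at_filter assms(2))
  ultimately show ?thesis by (rule tendsto_unique[rotated]) simp
qed

section \<open>Polynomial functions\<close>

definition polyfun :: "'v set \<Rightarrow> (('v \<Rightarrow> complex) \<Rightarrow> complex) \<Rightarrow> bool" where
  "polyfun V F \<longleftrightarrow> (\<exists>q. pvars q \<subseteq> V \<and> (\<forall>x. peval q x = F x))"

lemma polyfun_const: "polyfun V (\<lambda>x. c)"
  unfolding polyfun_def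
  by (rule exI[of _ "Poly_Mapping.single 0 c"]) (auto simp: peval_single pvars_def)

lemma polyfun_var: "v \<in> V \<Longrightarrow> polyfun V (\<lambda>x. x v)"
  unfolding polyfun_def
  by (rule exI[of _ "Poly_Mapping.single (Poly_Mapping.single v 1) 1"])
     (auto simp: peval_single meval_def pvars_def)

lemma polyfun_add:
  assumes "polyfun V F" "polyfun V G"
  shows "polyfun V (\<lambda>x. F x + G x)"
proof -
  obtain q r where "pvars q \<subseteq> V" "\<And>x. peval q x = F x" "pvars r \<subseteq> V" "\<And>x. peval r x = G x"
    using assms unfolding polyfun_def by blast
  then show ?thesis
    unfolding polyfun_def using pvars_add[of q r] by (intro exI[of _ "q + r"]) (auto simp: peval_add)
qed

lemma polyfun_mult:
  assumes "polyfun V F" "polyfun V G"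
  shows "polyfun V (\<lambda>x. F x * G x)"
proof -
  obtain q r where q: "pvars q \<subseteq> V" "\<And>x. peval q x = F x" and r: "pvars r \<subseteq> V" "\<And>x. peval r x = G x"
    using assms unfolding polyfun_def by blast
  define s where "s = (\<Sum>a\<in>Poly_Mapping.keys q. \<Sum>b\<in>Poly_Mapping.keys r.
      Poly_Mapping.single (a + b) (Poly_Mapping.lookup q a * Poly_Mapping.lookup r b))"
  have "peval s x = peval q x * peval r x" for x
  proof -
    have "peval s x = (\<Sum>a\<in>Poly_Mapping.keys q. \<Sum>b\<in>Poly_Mapping.keys r.
        (Poly_Mapping.lookup q a * meval a x) * (Poly_Mapping.lookup r b * meval b x))"
      unfolding s_def by (simp add: peval_sum peval_single meval_add mult_ac)
    then show ?thesis
      by (simp add: peval_eq_sum_meval sum_product)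
  qed
  moreover have "pvars s \<subseteq> V"
  proof -
    have "pvars s \<subseteq> (\<Union>a\<in>Poly_Mapping.keys q. pvars (\<Sum>b\<in>Poly_Mapping.keys r.
        Poly_Mapping.single (a + b) (Poly_Mapping.lookup q a * Poly_Mapping.lookup r b)))"
      unfolding s_def by (rule pvars_sum)
    also have "\<dots> \<subseteq> (\<Union>a\<in>Poly_Mapping.keys q. \<Union>b\<in>Poly_Mapping.keys r.
        pvars (Poly_Mapping.single (a + b) (Poly_Mapping.lookup q a * Poly_Mapping.lookup r b)))"
      by (intro UN_mono order_refl pvars_sum)
    also have "\<dots> \<subseteq> (\<Union>a\<in>Poly_Mapping.keys q. \<Union>b\<in>Poly_Mapping.keys r. Poly_Mapping.keys (a + b))"
      by (intro UN_mono order_refl pvars_single)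
    also have "\<dots> \<subseteq> V"
    proof -
      have "Poly_Mapping.keys (a + b) \<subseteq> V"
        if "a \<in> Poly_Mapping.keys q" "b \<in> Poly_Mapping.keys r" for a b
        using q(1) r(1) keys_add[of a b] that unfolding pvars_def by blast
      then show ?thesis by blast
    qed
    finally show ?thesis .
  qed
  ultimately show ?thesis
    unfolding polyfun_def using q(2) r(2) by (intro exI[of _ s]) simp
qed

lemma polyfun_sum: "(\<And>i. i \<in> I \<Longrightarrow> polyfun V (F i)) \<Longrightarrow> polyfun V (\<lambda>x. \<Sum>i\<in>I. F i x)"
  by (induction I rule: infinite_finite_induct) (auto intro: polyfun_add polyfun_const)

lemma polyfun_prod: "(\<And>i. i \<in> I \<Longrightarrow> polyfun V (F i)) \<Longrightarrow> polyfun V (\<lambda>x. \<Prod>i\<in>I. F i x)"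
  by (induction I rule: infinite_finite_induct) (auto intro: polyfun_mult polyfun_const)

lemma polyfun_power: "polyfun V F \<Longrightarrow> polyfun V (\<lambda>x. F x ^ k)"
  by (induction k) (auto intro: polyfun_mult polyfun_const)

lemma polyfun_peval_subst:
  assumes "\<And>v. v \<in> pvars p \<Longrightarrow> polyfun V (G v)"
  shows "polyfun V (\<lambda>x. peval p (\<lambda>v. G v x))"
  unfolding peval_def
  using assms unfolding pvars_def
  by (intro polyfun_sum polyfun_mult polyfun_const polyfun_prod polyfun_power) auto

lemma polymap_from_polyfuns:
  assumes "\<forall>k<n. polyfun {..<n} (F k)"
  obtains h where "polymap n h" "\<forall>k<n. \<forall>x. peval (h k) x = F k x"
proof -
  from assms obtain Q where Q: "\<forall>k<n. pvars (Q k) \<subseteq> {..<n} \<and> (\<forall>x. peval (Q k) x = F k x)"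
    unfolding polyfun_def by metis
  show ?thesis
    by (rule that[of "\<lambda>k. if k < n then Q k else 0"]) (use Q in \<open>auto simp: polymap_def\<close>)
qed

section \<open>Polynomials vanishing on affine space\<close>

lemma sum_digits_less:
  fixes B :: nat
  assumes "\<forall>v<N. a v < B"
  shows "(\<Sum>v<N. a v * B ^ v) < B ^ N"
  using assms
proof (induction N)
  case 0 then show ?case by simp
next
  case (Suc N)
  have "(\<Sum>v<Suc N. a v * B ^ v) = (\<Sum>v<N. a v * B ^ v) + a N * B ^ N" by simp
  also have "\<dots> < B ^ N + a N * B ^ N" using Suc by simp
  also have "\<dots> \<le> B ^ N + (B - 1) * B ^ N" using Suc.prems by (intro add_left_mono mult_right_mono) auto
  also have "\<dots> = B ^ Suc N" using Suc.prems
    by (cases B) auto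
  finally show ?case .
qed

lemma sum_digits_unique:
  fixes B :: nat
  assumes "\<forall>v<N. a v < B" "\<forall>v<N. b v < B"
    and "(\<Sum>v<N. a v * B ^ v) = (\<Sum>v<N. b v * B ^ v)"
  shows "\<forall>v<N. a v = b v"
  using assms
proof (induction N)
  case 0 then show ?case by simp
next
  case (Suc N)
  let ?A = "\<Sum>v<N. a v * B ^ v" and ?B = "\<Sum>v<N. b v * B ^ v"
  have A: "?A < B ^ N" and Bb: "?B < B ^ N" using Suc.prems sum_digits_less by auto
  have eq: "?A + a N * B ^ N = ?B + b N * B ^ N" using Suc.prems(3) by simp
  have "0 < B" using Suc.prems(1) by (metis lessI not_less0 neq0_conv)
  then have nz: "B ^ N \<noteq> 0" by simp
  have "(?A + a N * B ^ N) div B ^ N = a N" using A nz by (simp add: div_less)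
  moreover have "(?B + b N * B ^ N) div B ^ N = b N" using Bb nz by (simp add: div_less)
  ultimately have aN: "a N = b N" using eq by simp
  have "?A = ?B" using eq aN by simp
  moreover have "\<forall>v<N. a v < B" "\<forall>v<N. b v < B" using Suc.prems(1,2) by auto
  ultimately have "\<forall>v<N. a v = b v" using Suc.IH by blast
  then show ?case using aN less_Suc_eq by auto
qed

text \<open>Kronecker substitution: with a base \<open>B\<close> exceeding all exponents, \<open>x\<^sub>v = t ^ B ^ v\<close> turns
  distinct monomials into distinct powers of \<open>t\<close>, reducing to the one-variable identity theorem.\<close>

definition kronecker :: "nat \<Rightarrow> nat \<Rightarrow> (nat \<Rightarrow>\<^sub>0 nat) \<Rightarrow> nat" where
  "kronecker B N m = (\<Sum>v<N. Poly_Mapping.lookup m v * B ^ v)"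

lemma inj_on_kronecker:
  assumes keys: "\<forall>m\<in>M. Poly_Mapping.keys m \<subseteq> {..<N}" and exps: "\<forall>m\<in>M. \<forall>v. Poly_Mapping.lookup m v < B"
  shows "inj_on (kronecker B N) M"
proof (rule inj_onI)
  fix m m' assume mm: "m \<in> M" "m' \<in> M" "kronecker B N m = kronecker B N m'"
  have "\<forall>v<N. Poly_Mapping.lookup m v = Poly_Mapping.lookup m' v"
    using sum_digits_unique[of N "Poly_Mapping.lookup m" B "Poly_Mapping.lookup m'"] mm exps
    unfolding kronecker_def by blast
  moreover have "Poly_Mapping.lookup m v = Poly_Mapping.lookup m' v" if "\<not> v < N" for v
    using keys mm(1,2) that by (metis in_keys_iff lessThan_iff subsetD)
  ultimately show "m = m'"
    by (metis poly_mapping_eqI)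
qed

lemma meval_kronecker:
  assumes "Poly_Mapping.keys m \<subseteq> {..<N}"
  shows "meval m (\<lambda>v. if v < N then t ^ (B ^ v) else 0) = t ^ kronecker B N m"
proof -
  have "meval m (\<lambda>v. if v < N then t ^ (B ^ v) else 0)
      = (\<Prod>v\<in>{..<N}. (if v < N then t ^ (B ^ v) else 0) ^ Poly_Mapping.lookup m v)"
    using assms by (intro meval_eq_prod_superset) auto
  also have "\<dots> = (\<Prod>v\<in>{..<N}. t ^ (Poly_Mapping.lookup m v * B ^ v))"
    by (intro prod.cong) (auto simp: power_mult[symmetric] mult.commute)
  finally show ?thesis
    unfolding kronecker_def by (simp add: power_sum)
qed

lemma lookup_le_mdeg: "Poly_Mapping.lookup m v \<le> mdeg m"
  unfolding mdeg_def by (cases "v \<in> Poly_Mapping.keys m") (auto intro: member_le_sum simp: in_keys_iff)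

lemma peval_vanishing_imp_zero:
  assumes vars: "pvars q \<subseteq> {..<N}" and vanish: "\<forall>x\<in>pts N. peval q x = 0"
  shows "q = 0"
proof (rule ccontr)
  assume "q \<noteq> 0"
  then obtain m0 where m0: "m0 \<in> Poly_Mapping.keys q"
    by (metis poly_mapping_eqI lookup_zero not_in_keys_iff_lookup_eq_zero)
  define B where "B = Suc (\<Sum>m\<in>Poly_Mapping.keys q. mdeg m)"
  have "Poly_Mapping.lookup m v < B" if "m \<in> Poly_Mapping.keys q" for m v
  proof -
    have "Poly_Mapping.lookup m v \<le> (\<Sum>m\<in>Poly_Mapping.keys q. mdeg m)"
      using that by (intro order_trans[OF lookup_le_mdeg] member_le_sum) auto
    then show ?thesis unfolding B_def by simp
  qed
  moreover have keys_less: "\<forall>m\<in>Poly_Mapping.keys q. Poly_Mapping.keys m \<subseteq> {..<N}"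
    using vars unfolding pvars_def by auto
  ultimately have inj: "inj_on (kronecker B N) (Poly_Mapping.keys q)"
    by (intro inj_on_kronecker) auto
  define kap where "kap = kronecker B N"
  define xt where "xt t = (\<lambda>v. if v < N then t ^ (B ^ v) else 0)" for t :: complex
  have meval_xt: "meval m (xt t) = t ^ kap m" if "m \<in> Poly_Mapping.keys q" for m t
    unfolding xt_def kap_def using keys_less that by (simp add: meval_kronecker)
  define K where "K = Max (kap ` Poly_Mapping.keys q)"
  define c where "c k = (\<Sum>m | m \<in> Poly_Mapping.keys q \<and> kap m = k. Poly_Mapping.lookup q m)" for k
  have "(\<Sum>k\<le>K. c k * t ^ k) = 0" for t
  proof -
    have "(\<Sum>k\<le>K. c k * t ^ k) = (\<Sum>k\<le>K. \<Sum>m | m \<in> Poly_Mapping.keys q \<and> kap m = k. Poly_Mapping.lookup q m * t ^ kap m)"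
      unfolding c_def sum_distrib_right by (intro sum.cong refl) auto
    also have "\<dots> = (\<Sum>m\<in>Poly_Mapping.keys q. Poly_Mapping.lookup q m * t ^ kap m)"
      by (rule sum.group) (auto simp: K_def)
    also have "\<dots> = peval q (xt t)"
      unfolding peval_eq_sum_meval by (intro sum.cong) (auto simp: meval_xt)
    also have "\<dots> = 0"
      using vanish by (auto simp: pts_def xt_def)
    finally show ?thesis .
  qed
  then have "c (kap m0) = 0"
    using polyfun_eq_0[of c K] m0 by (auto simp: K_def)
  moreover have "{m. m \<in> Poly_Mapping.keys q \<and> kap m = kap m0} = {m0}"
    using inj m0 unfolding kap_def by (auto dest: inj_onD)
  ultimately show False
    using m0 by (simp add: c_def in_keys_iff)
qed

lemma var_notin_pvars_if_peval_upd_eq: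
  assumes vars: "pvars q \<subseteq> {..<n}" and indep: "\<forall>x\<in>pts n. peval q (x(j := 0)) = peval q x"
  shows "j \<notin> pvars q"
proof
  assume j: "j \<in> pvars q"
  define r where "r = Poly_Mapping.mapp (\<lambda>m c. if Poly_Mapping.lookup m j = 0 then 0 else c) q"
  have "peval r x = 0" if "x \<in> pts n" for x
  proof -
    have "peval r x = (\<Sum>m\<in>Poly_Mapping.keys q. Poly_Mapping.lookup r m * meval m x)"
      by (rule peval_eq_sum_superset) (simp_all add: r_def keys_mapp_subset)
    also have "\<dots> = peval q x - peval q (x(j := 0))"
      unfolding peval_eq_sum_meval sum_subtractf[symmetric]
      by (intro sum.cong refl) (simp add: r_def lookup_mapp when_def meval_upd_zero algebra_simps)
    finally show ?thesis
      using indep that by simp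
  qed
  moreover have "pvars r \<subseteq> {..<n}"
    unfolding r_def by (rule order_trans[OF pvars_mapp_subset vars])
  ultimately have "r = 0"
    by (intro peval_vanishing_imp_zero[of r n]) auto
  moreover obtain m where "m \<in> Poly_Mapping.keys q" "j \<in> Poly_Mapping.keys m"
    using j unfolding pvars_def by blast
  then have "Poly_Mapping.lookup r m \<noteq> 0"
    by (simp add: r_def lookup_mapp in_keys_iff)
  ultimately show False by simp
qed

definition unit_vec :: "nat \<Rightarrow> nat \<Rightarrow> complex" where
  "unit_vec j = (\<lambda>v. if v = j then 1 else 0)"

lemma peval_upd_eq_if_deriv_along_var_vanishes:
  assumes j: "j < n" and deriv_zero: "\<forall>p\<in>pts n. deriv (\<lambda>t. peval q (\<lambda>v. p v + t * unit_vec j v)) 0 = 0"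
  shows "\<forall>x\<in>pts n. peval q (x(j := 0)) = peval q x"
proof
  define \<phi> where "\<phi> p t = peval q (\<lambda>v. p v + t * unit_vec j v)" for p t
  have der: "(\<phi> p has_field_derivative deriv (\<phi> p) t) (at t)" for p t
    unfolding \<phi>_def by (rule holomorphic_derivI[OF holomorphic_on_peval_line]) auto
  have const: "\<phi> p t = \<phi> p 0" if p: "p \<in> pts n" for p t
  proof -
    have "(\<phi> p has_field_derivative 0) (at t0)" for t0
    proof -
      define p' where "p' = (\<lambda>v. p v + t0 * unit_vec j v)"
      have "p' \<in> pts n"
        using p j by (auto simp: p'_def pts_def unit_vec_def)
      then have "(\<phi> p' has_field_derivative 0) (at 0)"
        using der[of p' 0] deriv_zero unfolding \<phi>_def by simp
      moreover have "\<phi> p' = (\<lambda>u. \<phi> p (u + t0))"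
        unfolding \<phi>_def p'_def by (intro ext arg_cong[where f = "peval q"]) (auto simp: algebra_simps)
      ultimately have "((\<lambda>u. \<phi> p (u + t0)) has_field_derivative 0) (at 0)"
        by simp
      then show ?thesis
        using DERIV_shift[of "\<phi> p" 0 0 t0] by simp
    qed
    then show ?thesis
      using has_field_derivative_zero_constant[of UNIV "\<phi> p"] by auto
  qed
  fix x assume x: "x \<in> pts n"
  then have x0: "x(j := 0) \<in> pts n"
    by (auto simp: pts_def)
  have "peval q x = \<phi> (x(j := 0)) (x j)"
    unfolding \<phi>_def by (intro arg_cong[where f = "peval q"] ext) (auto simp: unit_vec_def)
  also have "\<dots> = \<phi> (x(j := 0)) 0"
    by (rule const[OF x0])
  also have "\<dots> = peval q (x(j := 0))"
    unfolding \<phi>_def by (simp add: fun_upd_def)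
  finally show "peval q (x(j := 0)) = peval q x" ..
qed

lemma exists_nonzero_deriv_along_var:
  assumes vars: "pvars q \<subseteq> {..<n}" and j: "j \<in> pvars q"
  obtains p D where "p \<in> pts n" "D \<noteq> 0"
    "((\<lambda>t. peval q (\<lambda>v. p v + t * unit_vec j v)) has_field_derivative D) (at 0)"
proof -
  have "j < n"
    using vars j by blast
  then obtain p where "p \<in> pts n" "deriv (\<lambda>t. peval q (\<lambda>v. p v + t * unit_vec j v)) 0 \<noteq> 0"
    using peval_upd_eq_if_deriv_along_var_vanishes var_notin_pvars_if_peval_upd_eq[OF vars] j by blast
  moreover have "((\<lambda>t. peval q (\<lambda>v. p v + t * unit_vec j v)) has_field_derivative
      deriv (\<lambda>t. peval q (\<lambda>v. p v + t * unit_vec j v)) 0) (at 0)"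
    by (rule holomorphic_derivI[OF holomorphic_on_peval_line]) auto
  ultimately show ?thesis
    using that by blast
qed

section \<open>Rescaling and linear parts\<close>

text \<open>For \<open>s \<noteq> 0\<close> and \<open>q\<close> without constant term, \<open>rescale s q\<close> represents \<open>x \<mapsto> q (s x) / s\<close>;
  because \<open>0 ^ 0 = 1\<close>, \<open>rescale 0 q\<close> is the linear part of \<open>q\<close>.\<close>

definition rescale :: "complex \<Rightarrow> 'v cpoly \<Rightarrow> 'v cpoly" where
  "rescale s q = Poly_Mapping.mapp (\<lambda>m c. s ^ (mdeg m - 1) * c) q"

lemma lookup_rescale: "Poly_Mapping.lookup (rescale s q) m = s ^ (mdeg m - 1) * Poly_Mapping.lookup q m"
  by (simp add: rescale_def lookup_mapp when_def in_keys_iff)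

lemma keys_rescale_subset: "Poly_Mapping.keys (rescale s q) \<subseteq> Poly_Mapping.keys q"
  unfolding rescale_def by (rule keys_mapp_subset)

lemma pvars_rescale_subset: "pvars (rescale s q) \<subseteq> pvars q"
  unfolding rescale_def by (rule pvars_mapp_subset)

lemma rescale_zero [simp]: "rescale s 0 = 0"
  by (rule poly_mapping_eqI) (simp add: lookup_rescale)

lemma peval_rescale:
  "peval (rescale s q) x = (\<Sum>m\<in>Poly_Mapping.keys q. s ^ (mdeg m - 1) * Poly_Mapping.lookup q m * meval m x)"
  by (simp add: peval_eq_sum_superset[OF finite_keys keys_rescale_subset] lookup_rescale)

lemma mdeg_eq_0_iff: "mdeg m = 0 \<longleftrightarrow> m = 0"
proof
  assume "mdeg m = 0"
  then show "m = 0"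
    unfolding mdeg_def
    by (intro poly_mapping_eqI) (metis finite_keys in_keys_iff lookup_zero sum_eq_0_iff)
qed (simp add: mdeg_def)

lemma mdeg_single: "mdeg (Poly_Mapping.single v (1::nat)) = 1"
  unfolding mdeg_def by simp

lemma mdeg_eq_1_iff: "mdeg m = 1 \<longleftrightarrow> (\<exists>l. m = Poly_Mapping.single l 1)"
proof
  assume deg: "mdeg m = 1"
  then have "m \<noteq> 0"
    by (auto simp: mdeg_def)
  then obtain l where l: "l \<in> Poly_Mapping.keys m"
    by (metis poly_mapping_eqI lookup_zero not_in_keys_iff_lookup_eq_zero)
  have "mdeg m = Poly_Mapping.lookup m l + (\<Sum>v\<in>Poly_Mapping.keys m - {l}. Poly_Mapping.lookup m v)"
    unfolding mdeg_def using l by (simp add: sum.remove)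
  moreover have "Poly_Mapping.lookup m l \<ge> 1"
    using l by (simp add: in_keys_iff)
  ultimately have ml: "Poly_Mapping.lookup m l = 1"
    and rest: "(\<Sum>v\<in>Poly_Mapping.keys m - {l}. Poly_Mapping.lookup m v) = 0"
    using deg by auto
  have "Poly_Mapping.lookup m v = 0" if "v \<noteq> l" for v
  proof (cases "v \<in> Poly_Mapping.keys m")
    case True
    then show ?thesis using rest that by (simp add: sum_eq_0_iff)
  qed (simp add: in_keys_iff)
  then have "m = Poly_Mapping.single l 1"
    by (intro poly_mapping_eqI) (auto simp: lookup_single when_def ml)
  then show "\<exists>l. m = Poly_Mapping.single l 1" ..
qed (auto simp: mdeg_def)

lemma peval_rescale_eq:
  assumes "Poly_Mapping.lookup q 0 = 0" "s \<noteq> 0"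
  shows "peval (rescale s q) x = peval q (\<lambda>v. s * x v) / s"
proof -
  have "s ^ mdeg m = s * s ^ (mdeg m - 1)" if "m \<in> Poly_Mapping.keys q" for m
  proof -
    have "m \<noteq> 0"
      using that assms(1) by (auto simp: in_keys_iff)
    then have "mdeg m \<noteq> 0"
      by (simp add: mdeg_eq_0_iff)
    then show ?thesis
      by (cases "mdeg m") simp_all
  qed
  then have "peval q (\<lambda>v. s * x v)
      = s * (\<Sum>m\<in>Poly_Mapping.keys q. s ^ (mdeg m - 1) * Poly_Mapping.lookup q m * meval m x)"
    unfolding peval_eq_sum_meval meval_scale sum_distrib_left by (intro sum.cong refl) (simp add: mult_ac)
  also have "\<dots> = s * peval (rescale s q) x"
    by (simp only: peval_rescale)
  finally show ?thesis
    using assms(2) by simp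
qed

lemma continuous_on_peval_rescale:
  assumes "\<And>v. continuous_on UNIV (\<lambda>s. Y s v)"
  shows "continuous_on UNIV (\<lambda>s::complex. peval (rescale s q) (Y s))"
  unfolding peval_rescale meval_def using assms by (intro continuous_intros) auto

lemma has_field_derivative_peval_ray:
  assumes "Poly_Mapping.lookup q 0 = 0"
  shows "((\<lambda>t. peval q (\<lambda>v. t * y v)) has_field_derivative peval (rescale 0 q) y) (at 0)"
proof -
  let ?R = "\<lambda>s. peval (rescale s q) y"
  have "continuous_on UNIV ?R"
    by (rule continuous_on_peval_rescale) simp
  then have "(?R \<longlongrightarrow> ?R 0) (at 0)"
    by (metis continuous_on_def UNIV_I at_within_open open_UNIV)
  moreover have "\<forall>\<^sub>F t in at 0. ?R t = (peval q (\<lambda>v. t * y v) - peval q (\<lambda>v. 0 * y v)) / (t - 0)"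
    using assms by (auto simp: eventually_at_filter peval_rescale_eq peval_at_zero)
  ultimately show ?thesis
    unfolding has_field_derivative_iff by (rule Lim_transform_eventually)
qed

lemma peval_rescale_0_translate:
  assumes translate: "\<And>x. peval q' x = peval q (\<lambda>v. x v + p v) - peval q p"
    and D: "((\<lambda>t. peval q (\<lambda>v. p v + t * y v)) has_field_derivative D) (at 0)"
  shows "peval (rescale 0 q') y = D"
proof -
  have ray: "(\<lambda>t. peval q' (\<lambda>v. t * y v))
      = (\<lambda>t. peval q (\<lambda>v. p v + t * y v) - peval q (\<lambda>v. p v + 0 * y v))"
    using translate by (simp add: add.commute)
  have "((\<lambda>t. peval q (\<lambda>v. p v + t * y v) - peval q (\<lambda>v. p v + 0 * y v))
      has_field_derivative D - 0) (at 0)"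
    by (intro derivative_intros D)
  then have "((\<lambda>t. peval q' (\<lambda>v. t * y v)) has_field_derivative D) (at 0)"
    unfolding ray by simp
  moreover have "Poly_Mapping.lookup q' 0 = 0"
    using translate by (simp add: peval_at_zero[symmetric])
  ultimately show ?thesis
    using DERIV_unique has_field_derivative_peval_ray by blast
qed

definition lin_form :: "nat \<Rightarrow> (nat \<Rightarrow> complex) \<Rightarrow> nat cpoly" where
  "lin_form n a = (\<Sum>l<n. Poly_Mapping.single (Poly_Mapping.single l 1) (a l))"

lemma peval_lin_form: "peval (lin_form n a) y = (\<Sum>l<n. a l * y l)"
  by (simp add: lin_form_def peval_sum peval_single meval_def)

lemma rescale_0_eq_lin_form:
  assumes vars: "pvars q \<subseteq> {..<n}" and const: "Poly_Mapping.lookup q 0 = 0"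
  shows "rescale 0 q = lin_form n (\<lambda>l. Poly_Mapping.lookup q (Poly_Mapping.single l 1))"
proof (rule poly_mapping_eqI)
  fix m
  have lookup_lin: "Poly_Mapping.lookup (lin_form n a) m
      = (\<Sum>l<n. if Poly_Mapping.single l 1 = m then a l else 0)" for a
    by (auto simp: lin_form_def lookup_sum lookup_single when_def intro!: sum.cong)
  show "Poly_Mapping.lookup (rescale 0 q) m
      = Poly_Mapping.lookup (lin_form n (\<lambda>l. Poly_Mapping.lookup q (Poly_Mapping.single l 1))) m"
  proof (cases "mdeg m = 1")
    case True
    then obtain l0 where m: "m = Poly_Mapping.single l0 1"
      using True unfolding mdeg_eq_1_iff by blast
    have single_eq: "Poly_Mapping.single l 1 = m \<longleftrightarrow> l = l0" for l
      unfolding m by (metis lookup_single_eq lookup_single_not_eq one_neq_zero)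
    have lin_at_m: "Poly_Mapping.lookup (lin_form n a) m = (if l0 < n then a l0 else 0)" for a
      unfolding lookup_lin single_eq by simp
    have "Poly_Mapping.lookup q m = 0" if "\<not> l0 < n"
    proof (rule ccontr)
      assume "Poly_Mapping.lookup q m \<noteq> 0"
      then have "l0 \<in> pvars q"
        unfolding pvars_def m by (auto simp: in_keys_iff intro!: bexI[of _ "Poly_Mapping.single l0 1"])
      with vars that show False by auto
    qed
    then show ?thesis
      using True lin_at_m by (cases "l0 < n") (simp_all add: lookup_rescale m)
  next
    case False
    then have "Poly_Mapping.single l 1 \<noteq> m" for l
      using mdeg_single[of l] by auto
    moreover have "0 ^ (mdeg m - 1) * Poly_Mapping.lookup q m = (0::complex)"
      using False const mdeg_eq_0_iff[of m] by (cases "mdeg m = 0") auto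
    ultimately show ?thesis
      by (simp add: lookup_rescale lookup_lin)
  qed
qed

definition rescale_map :: "complex \<Rightarrow> (nat \<Rightarrow> nat cpoly) \<Rightarrow> nat \<Rightarrow> nat cpoly" where
  "rescale_map s g = (\<lambda>k. rescale s (g k))"

lemma polymap_rescale_map: "polymap n g \<Longrightarrow> polymap n (rescale_map s g)"
  using pvars_rescale_subset polymap_vars unfolding polymap_def rescale_map_def
  by (metis (no_types, lifting) order_trans rescale_zero)

lemma ev_rescale_map_0_inverse:
  assumes g: "polymap n g" and g': "polymap n g'"
    and const: "\<And>k. Poly_Mapping.lookup (g k) 0 = 0" "\<And>k. Poly_Mapping.lookup (g' k) 0 = 0"
    and inv: "\<forall>x\<in>pts n. ev g (ev g' x) = x" and x: "x \<in> pts n"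
  shows "ev (rescale_map 0 g) (ev (rescale_map 0 g') x) = x"
proof
  fix k
  show "ev (rescale_map 0 g) (ev (rescale_map 0 g') x) k = x k"
  proof (cases "k < n")
    case True
    let ?F = "\<lambda>s. peval (rescale s (g k)) (\<lambda>v. peval (rescale s (g' v)) x)"
    have "continuous_on UNIV ?F"
      by (intro continuous_on_peval_rescale) (simp add: peval_rescale meval_def continuous_intros)
    moreover have "?F s = x k" if s: "s \<noteq> 0" for s
    proof -
      have sx: "(\<lambda>v. s * x v) \<in> pts n"
        using x by (simp add: pts_def)
      have "?F s = peval (g k) (\<lambda>v. s * (peval (g' v) (\<lambda>v. s * x v) / s)) / s"
        using s const by (simp add: peval_rescale_eq)
      also have "(\<lambda>v. s * (peval (g' v) (\<lambda>v. s * x v) / s)) = ev g' (\<lambda>v. s * x v)"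
        using s by (simp add: ev_def)
      also have "peval (g k) (ev g' (\<lambda>v. s * x v)) = s * x k"
        using inv sx by (metis ev_def)
      finally show ?thesis
        using s by simp
    qed
    ultimately have "?F 0 = x k"
      by (rule continuous_eq_const_at_0)
    then show ?thesis
      by (simp add: ev_def rescale_map_def)
  next
    case False
    then show ?thesis
      using polymap_rescale_map[OF g] x by (simp add: polymap_def pts_def ev_def)
  qed
qed

lemma linear_aut_of_lin_forms:
  assumes L: "polymap n L" and L': "polymap n L'"
    and a: "\<forall>k<n. L k = lin_form n (a k)" and b: "\<forall>k<n. L' k = lin_form n (b k)"
    and inv: "\<forall>x\<in>pts n. ev L (ev L' x) = x \<and> ev L' (ev L x) = x"
  shows "linear_aut n L"
proof -
  have ev_L: "ev L y k = (\<Sum>l<n. a k l * y l)" and ev_L': "ev L' y k = (\<Sum>l<n. b k l * y l)"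
    if "k < n" for y k
    using a b that by (simp_all add: ev_def peval_lin_form)
  have unit_pts: "unit_vec j \<in> pts n" if "j < n" for j
    using that by (simp add: pts_def unit_vec_def)
  have sum_unit: "(\<Sum>l<n. c l * unit_vec j l) = c j" if "j < n" for c j
    using that by (simp add: unit_vec_def if_distrib cong: if_cong)
  have "(\<Sum>k<n. a i k * b k j) = (if i = j then 1 else 0) \<and> (\<Sum>k<n. b i k * a k j) = (if i = j then 1 else 0)"
    if "i < n" "j < n" for i j
  proof -
    have "(\<Sum>k<n. a i k * b k j) = ev L (ev L' (unit_vec j)) i"
      and "(\<Sum>k<n. b i k * a k j) = ev L' (ev L (unit_vec j)) i"
      using that by (simp_all add: ev_L ev_L' sum_unit)
    then show ?thesis
      using inv unit_pts[OF that(2)] by (simp add: unit_vec_def)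
  qed
  moreover have "L \<in> Aut n"
    unfolding Aut_def using L L' inv by blast
  ultimately show ?thesis
    unfolding linear_aut_def using a lin_form_def by (intro conjI exI[of _ a] exI[of _ b]) auto
qed

lemma linear_aut_rescale_map_0:
  assumes g: "g \<in> Aut n" and const: "\<And>k. Poly_Mapping.lookup (g k) 0 = 0"
  shows "linear_aut n (rescale_map 0 g)"
proof -
  obtain g' where pg: "polymap n g" and pg': "polymap n g'"
    and inv: "\<forall>x\<in>pts n. ev g (ev g' x) = x \<and> ev g' (ev g x) = x"
    using g unfolding Aut_def by blast
  have "ev g' (\<lambda>_. 0) = ev g' (ev g (\<lambda>_. 0))"
    using const by (simp add: ev_def peval_at_zero)
  also have "\<dots> = (\<lambda>_. 0)"
    using inv by (simp add: pts_def)
  finally have const': "Poly_Mapping.lookup (g' k) 0 = 0" for k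
    by (metis ev_def peval_at_zero)
  show ?thesis
  proof (rule linear_aut_of_lin_forms)
    show "\<forall>k<n. rescale_map 0 g k = lin_form n (\<lambda>l. Poly_Mapping.lookup (g k) (Poly_Mapping.single l 1))"
      and "\<forall>k<n. rescale_map 0 g' k = lin_form n (\<lambda>l. Poly_Mapping.lookup (g' k) (Poly_Mapping.single l 1))"
      using rescale_0_eq_lin_form polymap_vars pg pg' const const' unfolding rescale_map_def by blast+
    show "\<forall>x\<in>pts n. ev (rescale_map 0 g) (ev (rescale_map 0 g') x) = x
        \<and> ev (rescale_map 0 g') (ev (rescale_map 0 g) x) = x"
      using ev_rescale_map_0_inverse[OF pg pg' const const'] ev_rescale_map_0_inverse[OF pg' pg const' const] inv
      by blast
  qed (use polymap_rescale_map pg pg' in blast)+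
qed

section \<open>Closed subgroups containing the triangular group\<close>

lemma exists_lower_var_if_notin_Bn:
  assumes f: "f \<in> Aut n" "f \<notin> Bn n"
  obtains i j where "i < n" "j < i" "j \<in> pvars (f i)"
proof -
  obtain i where i: "i < n" "\<not> pvars (f i) \<subseteq> {i..<n}"
    using f unfolding Bn_def by blast
  then obtain j where j: "j \<in> pvars (f i)" "j \<notin> {i..<n}"
    by blast
  moreover have "j < n"
    using f(1) polymap_vars[of n f i] j(1) unfolding Aut_def by blast
  ultimately show ?thesis
    using that[OF i(1), of j] by simp
qed

lemma rescale_map_0_notin_Bn:
  assumes const: "\<And>k. Poly_Mapping.lookup (g k) 0 = 0" and "i < n" "j < i"
    and "peval (rescale 0 (g i)) (unit_vec j) \<noteq> 0"
  shows "rescale_map 0 g \<notin> Bn n"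
proof
  assume "rescale_map 0 g \<in> Bn n"
  then have "pvars (rescale 0 (g i)) \<subseteq> {i..<n}"
    using assms(2) unfolding Bn_def rescale_map_def by blast
  then have "peval (rescale 0 (g i)) (unit_vec j) = peval (rescale 0 (g i)) (\<lambda>_. 0)"
    using assms(3) by (intro peval_cong) (auto simp: unit_vec_def)
  also have "\<dots> = 0"
    by (simp add: peval_at_zero lookup_rescale const mdeg_def)
  finally show False
    using assms(4) by blast
qed

lemma ind_closed_rescale_map_0:
  assumes closed: "ind_closed n H" and g: "polymap n g"
    and orbit: "\<And>s. s \<noteq> 0 \<Longrightarrow> rescale_map s g \<in> H" and aut: "rescale_map 0 g \<in> Aut n"
  shows "rescale_map 0 g \<in> H"
proof -
  define d where "d = (\<Sum>k<n. \<Sum>m\<in>Poly_Mapping.keys (g k). mdeg m)"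
  have "rescale_map s g \<in> Aut_le n d" if "rescale_map s g \<in> Aut n" for s
  proof -
    have "mdeg m \<le> d" if "k < n" "m \<in> Poly_Mapping.keys (rescale s (g k))" for k m
    proof -
      have "mdeg m \<le> (\<Sum>m\<in>Poly_Mapping.keys (g k). mdeg m)"
        using that keys_rescale_subset by (intro member_le_sum) auto
      also have "\<dots> \<le> d"
        unfolding d_def using that(1) by (intro member_le_sum) auto
      finally show ?thesis .
    qed
    then show ?thesis
      unfolding Aut_le_def rescale_map_def using that by (simp add: rescale_map_def)
  qed
  note in_Aut_le = this
  have H_Aut: "H \<subseteq> Aut n"
    using closed unfolding ind_closed_def by blast
  obtain P where P: "\<forall>f\<in>Aut_le n d. f \<in> H \<inter> Aut_le n d \<longleftrightarrow>
      (\<forall>p\<in>P. peval p (\<lambda>(i, m). Poly_Mapping.lookup (f i) m) = 0)"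
    using closed unfolding ind_closed_def zar_closed_in_def by blast
  have "peval p (\<lambda>(i, m). Poly_Mapping.lookup (rescale_map 0 g i) m) = 0" if "p \<in> P" for p
  proof (rule continuous_eq_const_at_0[where F = "\<lambda>s. peval p (\<lambda>(i, m). Poly_Mapping.lookup (rescale_map s g i) m)"])
    show "continuous_on UNIV (\<lambda>s. peval p (\<lambda>(i, m). Poly_Mapping.lookup (rescale_map s g i) m))"
      by (rule continuous_on_peval) (auto simp: rescale_map_def lookup_rescale split: prod.split intro!: continuous_intros)
    show "peval p (\<lambda>(i, m). Poly_Mapping.lookup (rescale_map s g i) m) = 0" if "s \<noteq> 0" for s
      using P in_Aut_le orbit[OF that] H_Aut \<open>p \<in> P\<close> by blast
  qed
  then show ?thesis
    using P in_Aut_le[OF aut] by blast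
qed

definition diag_affine :: "nat \<Rightarrow> (nat \<Rightarrow> complex) \<Rightarrow> (nat \<Rightarrow> complex) \<Rightarrow> nat \<Rightarrow> nat cpoly" where
  "diag_affine n a b i = (if i < n then Poly_Mapping.single (Poly_Mapping.single i 1) (a i) + Poly_Mapping.single 0 (b i) else 0)"

lemma ev_diag_affine: "ev (diag_affine n a b) x = (\<lambda>i. if i < n then a i * x i + b i else 0)"
  by (auto simp: ev_def diag_affine_def peval_add peval_single meval_def)

lemma pvars_diag_affine: "pvars (diag_affine n a b i) \<subseteq> {i}"
proof -
  have "pvars (Poly_Mapping.single (Poly_Mapping.single i 1) (a i) + Poly_Mapping.single 0 (b i)) \<subseteq> {i}"
    using pvars_add[of "Poly_Mapping.single (Poly_Mapping.single i 1) (a i)" "Poly_Mapping.single 0 (b i)"]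
      pvars_single[of "Poly_Mapping.single i 1" "a i"] pvars_single[of 0 "b i"]
    by auto
  then show ?thesis
    by (auto simp: diag_affine_def pvars_def)
qed

lemma polymap_diag_affine: "polymap n (diag_affine n a b)"
  using pvars_diag_affine unfolding polymap_def by (fastforce simp: diag_affine_def)

lemma diag_affine_in_Bn:
  assumes "\<forall>i<n. a i \<noteq> 0"
  shows "diag_affine n a b \<in> Bn n"
proof -
  let ?inv = "diag_affine n (\<lambda>i. 1 / a i) (\<lambda>i. - b i / a i)"
  have "\<forall>x\<in>pts n. ev (diag_affine n a b) (ev ?inv x) = x \<and> ev ?inv (ev (diag_affine n a b) x) = x"
    using assms by (auto simp: ev_diag_affine pts_def field_simps)
  then have "diag_affine n a b \<in> Aut n"
    unfolding Aut_def using polymap_diag_affine by blast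
  then show ?thesis
    unfolding Bn_def using pvars_diag_affine by fastforce
qed

lemma aut_subgroup_comp:
  assumes "aut_subgroup n H" "f \<in> H" "g \<in> H" "polymap n h" "\<forall>x\<in>pts n. ev h x = ev f (ev g x)"
  shows "h \<in> H"
  using assms unfolding aut_subgroup_def by blast

lemma aut_subgroup_polymap: "aut_subgroup n H \<Longrightarrow> f \<in> H \<Longrightarrow> polymap n f"
  unfolding aut_subgroup_def Aut_def by blast

lemma aut_subgroup_precomp_diag_affine:
  assumes H: "aut_subgroup n H" "Bn n \<subseteq> H" and f: "f \<in> H" and a: "\<forall>i<n. a i \<noteq> 0"
    and h: "polymap n h" "\<forall>k<n. \<forall>x. peval (h k) x = peval (f k) (\<lambda>v. a v * x v + b v)"
  shows "h \<in> H"
proof (rule aut_subgroup_comp[OF H(1) f _ h(1)])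
  show "diag_affine n a b \<in> H"
    using H(2) diag_affine_in_Bn[OF a] by blast
  have pf: "polymap n f"
    using aut_subgroup_polymap[OF H(1) f] .
  have "ev h x k = ev f (ev (diag_affine n a b) x) k" for x k
  proof (cases "k < n")
    case True
    have "peval (f k) (ev (diag_affine n a b) x) = peval (f k) (\<lambda>v. a v * x v + b v)"
      by (rule peval_cong) (use polymap_vars[OF pf, of k] in \<open>auto simp: ev_diag_affine\<close>)
    with True h(2) show ?thesis
      by (simp add: ev_def)
  qed (use h(1) pf in \<open>simp add: ev_def polymap_def\<close>)
  then show "\<forall>x\<in>pts n. ev h x = ev f (ev (diag_affine n a b) x)"
    by blast
qed

lemma aut_subgroup_postcomp_diag_affine:
  assumes H: "aut_subgroup n H" "Bn n \<subseteq> H" and f: "f \<in> H" and a: "\<forall>i<n. a i \<noteq> 0"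
    and h: "polymap n h" "\<forall>k<n. \<forall>x. peval (h k) x = a k * peval (f k) x + b k"
  shows "h \<in> H"
proof (rule aut_subgroup_comp[OF H(1) _ f h(1)])
  show "diag_affine n a b \<in> H"
    using H(2) diag_affine_in_Bn[OF a] by blast
  have "ev h x k = ev (diag_affine n a b) (ev f x) k" for x k
    using h unfolding ev_diag_affine by (cases "k < n") (simp_all add: ev_def polymap_def)
  then show "\<forall>x\<in>pts n. ev h x = ev (diag_affine n a b) (ev f x)"
    by blast
qed

lemma aut_subgroup_translate:
  assumes H: "aut_subgroup n H" "Bn n \<subseteq> H" and f: "f \<in> H"
  obtains g where "g \<in> H" "\<forall>k<n. \<forall>x. peval (g k) x = peval (f k) (\<lambda>v. x v + p v) - peval (f k) p"
    "\<And>k. Poly_Mapping.lookup (g k) 0 = 0"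
proof -
  have pf: "polymap n f"
    using aut_subgroup_polymap[OF H(1) f] .
  have shifted: "\<forall>k<n. polyfun {..<n} (\<lambda>x. peval (f k) (\<lambda>v. x v + p v))"
    using polymap_vars[OF pf] by (auto intro!: polyfun_peval_subst polyfun_add polyfun_var polyfun_const)
  obtain h where h: "polymap n h" "\<forall>k<n. \<forall>x. peval (h k) x = peval (f k) (\<lambda>v. x v + p v)"
    by (rule polymap_from_polyfuns[OF shifted])
  have "h \<in> H"
    by (rule aut_subgroup_precomp_diag_affine[OF H f, of "\<lambda>_. 1" h p]) (use h in simp_all)
  have "\<forall>k<n. polyfun {..<n} (\<lambda>x. peval (f k) (\<lambda>v. x v + p v) - peval (f k) p)"
    using polyfun_add[OF shifted[rule_format] polyfun_const[of _ "- peval (f _) p"]] by simp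
  then obtain g where g: "polymap n g"
    "\<forall>k<n. \<forall>x. peval (g k) x = peval (f k) (\<lambda>v. x v + p v) - peval (f k) p"
    by (rule polymap_from_polyfuns)
  have "g \<in> H"
    by (rule aut_subgroup_postcomp_diag_affine[OF H \<open>h \<in> H\<close>, of "\<lambda>_. 1" g "\<lambda>k. - peval (f k) p"])
       (use g h in simp_all)
  moreover have "Poly_Mapping.lookup (g k) 0 = 0" for k
    using g by (cases "k < n") (simp_all add: peval_at_zero[symmetric] polymap_def)
  ultimately show ?thesis
    using that g by blast
qed

lemma aut_subgroup_rescale_map:
  assumes H: "aut_subgroup n H" "Bn n \<subseteq> H" and g: "g \<in> H"
    and const: "\<And>k. Poly_Mapping.lookup (g k) 0 = 0" and s: "s \<noteq> 0"
  shows "rescale_map s g \<in> H"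
proof -
  have pg: "polymap n g"
    using aut_subgroup_polymap[OF H(1) g] .
  have "\<forall>k<n. polyfun {..<n} (\<lambda>x. peval (g k) (\<lambda>v. s * x v))"
    using polymap_vars[OF pg] by (auto intro!: polyfun_peval_subst polyfun_mult polyfun_var polyfun_const)
  then obtain r where r: "polymap n r" "\<forall>k<n. \<forall>x. peval (r k) x = peval (g k) (\<lambda>v. s * x v)"
    by (rule polymap_from_polyfuns)
  have "r \<in> H"
    by (rule aut_subgroup_precomp_diag_affine[OF H g, of "\<lambda>_. s" r "\<lambda>_. 0"]) (use r s in simp_all)
  show ?thesis
    by (rule aut_subgroup_postcomp_diag_affine[OF H \<open>r \<in> H\<close>, of "\<lambda>_. 1 / s" _ "\<lambda>_. 0"])
       (use polymap_rescale_map[OF pg] r s const in \<open>simp_all add: rescale_map_def peval_rescale_eq\<close>)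
qed

lemma linear_part_in_closed_subgroup:
  assumes H: "aut_subgroup n H" "Bn n \<subseteq> H" "ind_closed n H"
    and g: "g \<in> H" and const: "\<And>k. Poly_Mapping.lookup (g k) 0 = 0"
  shows "rescale_map 0 g \<in> H" "linear_aut n (rescale_map 0 g)"
proof -
  have "g \<in> Aut n"
    using g H(1) unfolding aut_subgroup_def by blast
  then show lin: "linear_aut n (rescale_map 0 g)"
    using const by (rule linear_aut_rescale_map_0)
  show "rescale_map 0 g \<in> H"
  proof (rule ind_closed_rescale_map_0[OF H(3) aut_subgroup_polymap[OF H(1) g]])
    show "rescale_map s g \<in> H" if "s \<noteq> 0" for s
      using aut_subgroup_rescale_map[OF H(1,2) g const that] .
    show "rescale_map 0 g \<in> Aut n"
      using lin unfolding linear_aut_def by (rule conjunct1)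
  qed
qed

theorem proposition3p3:
  fixes n :: nat and H :: "(nat \<Rightarrow> nat cpoly) set"
  assumes "n \<ge> 2"
    and "aut_subgroup n H"
    and "ind_closed n H"
    and "Bn n \<subset> H"
  shows "\<exists>f\<in>H. linear_aut n f \<and> f \<notin> Bn n"
proof -
  have B_H: "Bn n \<subseteq> H"
    using assms(4) by blast
  obtain f where f: "f \<in> H" "f \<notin> Bn n"
    using assms(4) by blast
  then have pf: "polymap n f" and "f \<in> Aut n"
    using assms(2) aut_subgroup_polymap unfolding aut_subgroup_def by blast+
  then obtain i j where i: "i < n" and ji: "j < i" and j: "j \<in> pvars (f i)"
    using exists_lower_var_if_notin_Bn f(2) by blast
  obtain p D where "D \<noteq> 0"
    and D: "((\<lambda>t. peval (f i) (\<lambda>v. p v + t * unit_vec j v)) has_field_derivative D) (at 0)"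
    using exists_nonzero_deriv_along_var[OF polymap_vars[OF pf] j] by blast
  obtain g where g: "g \<in> H"
    and translate: "\<forall>k<n. \<forall>x. peval (g k) x = peval (f k) (\<lambda>v. x v + p v) - peval (f k) p"
    and const: "\<And>k. Poly_Mapping.lookup (g k) 0 = 0"
    using aut_subgroup_translate[OF assms(2) B_H f(1), where p = p] by auto
  have "rescale_map 0 g \<notin> Bn n"
    using rescale_map_0_notin_Bn[OF const i ji] peval_rescale_0_translate[OF translate[rule_format, OF i] D]
      \<open>D \<noteq> 0\<close> by simp
  then show ?thesis
    using linear_part_in_closed_subgroup[OF assms(2) B_H assms(3) g const] by blast
qed

end
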